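(* For an even $i$, 2Merge requires \[ \lceil\lg(i-1)\rceil + 1 - \frac{2}{p_i} + \frac{1}{3p_i^2} + O(1/i) \] comparisons on average at Step~4.
   Context: $\lg=\log_2$, $p_x = x/2^{\lceil \lg x\rceil}$. RHBS$(A,T)$, $T=(t_1,\dots,t_m)$ sorted: if $m\le 3\cdot 2^{\lceil\lg(m+1)\rceil-2}-1$ let $d=2^{\lceil\lg(m+1)\rceil-2}$, else $d=m-2^{\lceil\lg(m+1)\rceil-1}+1$; compare $A$ with $t_d$ and recurse on the left or right part. 2Merge$(A,B,T)$ with $T=(t_1,\dots,t_{i-2})$ sorted, $i$ even, $i\ge4$: Step 1 compare and swap so $A<B$; Steps 2–3 locate and insert $A$ (comparing $A$ with $t_{\lceil(1-2^{-r/2})i\rceil}$ for $r=1,2,\dots$ and then RHBS in the identified interval); suppose $A$ falls between $t_{\ell}$ and $t_{\ell+1}$. Step 4: insert $B$ into $(t_{\ell+1},\dots,t_{i-2})$ by RHBS. The two inserted elements occupy uniformly random distinct positions among the $i$ positions; given $A<B$, $\mathbf{Pr}[t_{\ell-1}<A<t_\ell]=(i-\ell)/\binom{i}{2}$, and $B$ is uniformly distributed over the positions to the right of $A$. *)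

theory Defs
  imports Complex_Main
begin

definition lg :: "real \<Rightarrow> real" where "lg x = log 2 x"

definition p_ratio :: "nat \<Rightarrow> real" where
  "p_ratio x = real x / 2 powr (of_int \<lceil>lg (real x)\<rceil>)"

text \<open>Split index d of RHBS on a sorted list of length m (m \<ge> 1), with
  K = ceil (lg (m+1)):  if m \<le> 3 * 2^(K-2) - 1 then d = 2^(K-2) else
  d = m - 2^(K-1) + 1.  (Condition written as 4(m+1) \<le> 3*2^K, which is the
  same inequality and also handles K = 1 where 2^(K-2) = 1/2.)\<close>
definition rhbs_K :: "nat \<Rightarrow> nat" where
  "rhbs_K m = nat \<lceil>lg (real (m + 1))\<rceil>"

definition rhbs_d :: "nat \<Rightarrow> nat" where
  "rhbs_d m = (if 4 * (m + 1) \<le> 3 * 2 ^ rhbs_K m then 2 ^ rhbs_K m div 4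
               else m + 1 - 2 ^ rhbs_K m div 2)"

lemma rhbs_d_bounds:
  assumes "m \<ge> 1" shows "1 \<le> rhbs_d m \<and> rhbs_d m \<le> m"
proof -
  define K where "K = rhbs_K m"
  have pos: "real (m+1) > 0" by simp
  have le: "real (m+1) \<le> 2 powr real K"
  proof -
    have "lg (real (m+1)) \<le> real K" unfolding K_def rhbs_K_def by linarith
    hence "2 powr lg (real (m+1)) \<le> 2 powr real K" by simp
    thus ?thesis using pos by (simp add: lg_def)
  qed
  have lt: "2 powr (real K - 1) < real (m+1)"
  proof -
    have "real K - 1 < lg (real (m+1))"
    proof -
      have "lg (real (m+1)) \<ge> 1" using assms by (simp add: lg_def)
      hence "real K = of_int \<lceil>lg (real (m+1))\<rceil>"
        unfolding K_def rhbs_K_def by simp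
      thus ?thesis by linarith
    qed
    hence "2 powr (real K - 1) < 2 powr lg (real (m+1))" by simp
    thus ?thesis using pos by (simp add: lg_def)
  qed
  have le': "m + 1 \<le> 2 ^ K"
  proof -
    have "real (m+1) \<le> real (2 ^ K)" using le by (simp add: powr_realpow)
    thus ?thesis by (simp only: of_nat_le_iff)
  qed
  have K1: "K \<ge> 1"
  proof (rule ccontr)
    assume "\<not> K \<ge> 1" hence "K = 0" by simp
    thus False using le' assms by simp
  qed
  have lt': "2 ^ (K - 1) < m + 1"
  proof -
    have "2 powr (real K - 1) = 2 ^ (K - 1)" using K1
      by (simp add: powr_realpow [symmetric] of_nat_diff)
    hence "real (2 ^ (K - 1)) < real (m + 1)" using lt by simp
    thus ?thesis by (simp only: of_nat_less_iff)
  qed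
  have h: "2 ^ K div 2 = (2::nat) ^ (K - 1)"
  proof -
    obtain j where "K = Suc j" using K1 by (cases K) auto
    thus ?thesis by simp
  qed
  show ?thesis
  proof (cases "4 * (m + 1) \<le> 3 * 2 ^ K")
    case True
    have K2: "K \<ge> 2"
    proof (rule ccontr)
      assume "\<not> K \<ge> 2" hence "K = 1" using K1 by simp
      thus False using True assms by simp
    qed
    have "2 ^ K div 4 = (2::nat) ^ (K - 2)"
    proof -
      obtain j where "K = Suc (Suc j)" using K2 by (metis add_2_eq_Suc le_Suc_ex)
      thus ?thesis by simp
    qed
    moreover have "(2::nat) ^ (K - 2) \<le> 2 ^ (K - 1)" by simp
    moreover have "(1::nat) \<le> 2 ^ (K - 2)" by simp
    ultimately have "1 \<le> (2::nat) ^ K div 4 \<and> 2 ^ K div 4 \<le> m" using lt' by linarith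
    thus ?thesis using True unfolding rhbs_d_def K_def[symmetric] by simp
  next
    case False
    have "(1::nat) \<le> 2 ^ (K - 1)" by simp
    hence "1 \<le> m + 1 - (2::nat) ^ K div 2 \<and> m + 1 - 2 ^ K div 2 \<le> m" using lt' h by linarith
    thus ?thesis using False unfolding rhbs_d_def K_def[symmetric] by simp
  qed
qed

text \<open>Number of comparisons RHBS makes to insert an element into a sorted list
  of length m, when exactly k list elements are smaller than it (k \<le> m):
  compare with t_d; if the element is smaller, recurse on t_1..t_(d-1),
  otherwise on t_(d+1)..t_m.\<close>
function rhbs_cost :: "nat \<Rightarrow> nat \<Rightarrow> nat" where
  "rhbs_cost m k = (if m = 0 then 0 else
     1 + (if k < rhbs_d m then rhbs_cost (rhbs_d m - 1) k
          else rhbs_cost (m - rhbs_d m) (k - rhbs_d m)))"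
  by auto
termination
proof (relation "measure fst")
  show "wf (measure fst)" by simp
next
  fix m k :: nat
  assume "m \<noteq> 0"
  hence b: "1 \<le> rhbs_d m" "rhbs_d m \<le> m" using rhbs_d_bounds[of m] by auto
  show "((rhbs_d m - 1, k), m, k) \<in> measure fst" using b by simp
  show "((m - rhbs_d m, k - rhbs_d m), m, k) \<in> measure fst" using b by simp
qed

declare rhbs_cost.simps [simp del]

text \<open>Average number of comparisons of Step 4 of 2Merge with i - 2 sorted
  elements: the final positions a < b (in 1..i) of A and B are a uniformly
  random pair; B is inserted by RHBS into t_a, ..., t_(i-2) (i - 1 - a
  elements), of which exactly b - a - 1 are smaller than B.\<close>
definition step4_avg :: "nat \<Rightarrow> real" where
  "step4_avg i = (\<Sum>a\<in>{1..i}. \<Sum>b\<in>{a<..i}. real (rhbs_cost (i - 1 - a) (b - a - 1)))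
                 / real (i choose 2)"

end

theory Submission
  imports Defs
begin

text \<open>Summed over the \<open>i choose 2\<close> placements of \<open>A < B\<close>, the cost of Step 4 is
  \<open>\<Sum>m < i - 1. E m\<close>, where \<open>E m\<close> is the total RHBS cost over all \<open>m + 1\<close> possible
  ranks, i.e.\ the external path length of its decision tree with \<open>n = m + 1\<close> leaves.
  RHBS splits so that both subtrees have between \<open>2^k\<close> and \<open>2^(k+1)\<close> leaves,
  whence \<open>E m = n (j + 2) - 2^(j+1)\<close> for \<open>2^j \<le> n \<le> 2^(j+1)\<close>. Summing gives the
  average exactly; with \<open>P = 2^\<lceil>lg i\<rceil> \<in> [i, 2i]\<close> it differs from the main term by
  \<open>(P\<^sup>2 - 3Pi + 2i) / (3i\<^sup>2(i - 1)) = O(1/i)\<close>.\<close>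

lemma ceiling_lg_eq:
  fixes n k :: nat
  assumes "2 ^ k < n" "n \<le> 2 ^ (k + 1)"
  shows "\<lceil>lg (real n)\<rceil> = int k + 1"
  using ceiling_log_nat_eq_if[of 2 k n] assms unfolding lg_def by simp

lemma rhbs_K_eq: "2 ^ k < n \<Longrightarrow> n \<le> 2 ^ (k + 1) \<Longrightarrow> rhbs_K (n - 1) = k + 1"
  unfolding rhbs_K_def using ceiling_lg_eq[of k n] by simp

lemma rhbs_d_balanced:
  fixes k n :: nat
  defines "x \<equiv> 2 ^ k" and "d \<equiv> rhbs_d (n - 1)"
  assumes "2 * x < n" "n \<le> 4 * x"
  shows "x \<le> d" "d \<le> 2 * x" "x \<le> n - d" "n - d \<le> 2 * x"
proof -
  have K: "rhbs_K (n - 1) = k + 2"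
    using rhbs_K_eq[of "k + 1" n] assms by (simp add: x_def)
  have "d = (if n \<le> 3 * x then x else n - 2 * x)"
    using assms unfolding d_def rhbs_d_def K by (simp add: x_def)
  then show "x \<le> d" "d \<le> 2 * x" "x \<le> n - d" "n - d \<le> 2 * x"
    using assms by (auto split: if_splits)
qed

definition rhbs_cost_sum :: "nat \<Rightarrow> nat" where
  "rhbs_cost_sum m = (\<Sum>k\<le>m. rhbs_cost m k)"

lemma rhbs_cost_sum_split:
  assumes "m \<ge> 1"
  defines "d \<equiv> rhbs_d m"
  shows "rhbs_cost_sum m = (m + 1) + rhbs_cost_sum (d - 1) + rhbs_cost_sum (m - d)"
proof -
  have d: "1 \<le> d" "d \<le> m" using rhbs_d_bounds[OF assms(1)] d_def by auto
  have "rhbs_cost_sum m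
      = (\<Sum>k\<le>m. 1 + (if k < d then rhbs_cost (d - 1) k else rhbs_cost (m - d) (k - d)))"
    unfolding rhbs_cost_sum_def d_def using assms(1)
    by (intro sum.cong refl) (subst rhbs_cost.simps, simp)
  also have "\<dots> = (m + 1) + (\<Sum>k\<le>m. if k < d then rhbs_cost (d - 1) k else rhbs_cost (m - d) (k - d))"
    by (simp only: sum.distrib) simp
  also have "{..m} = {..<d} \<union> {d..m}" using d by auto
  also have "(\<Sum>k\<in>{..<d} \<union> {d..m}. if k < d then rhbs_cost (d - 1) k else rhbs_cost (m - d) (k - d))
      = (\<Sum>k<d. rhbs_cost (d - 1) k) + (\<Sum>k\<in>{d..m}. rhbs_cost (m - d) (k - d))"
    by (subst sum.union_disjoint) auto
  also have "(\<Sum>k<d. rhbs_cost (d - 1) k) = rhbs_cost_sum (d - 1)"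
    unfolding rhbs_cost_sum_def using d by (intro sum.cong) auto
  also have "(\<Sum>k\<in>{d..m}. rhbs_cost (m - d) (k - d)) = rhbs_cost_sum (m - d)"
    unfolding rhbs_cost_sum_def atMost_atLeast0 using d
    by (intro sum.reindex_bij_witness[where i="\<lambda>k. k + d" and j="\<lambda>k. k - d"]) auto
  finally show ?thesis by simp
qed

lemma rhbs_cost_sum_closed_form:
  assumes "2 ^ j \<le> n" "n \<le> 2 ^ (j + 1)"
  shows "rhbs_cost_sum (n - 1) + 2 ^ (j + 1) = n * (j + 2)"
  using assms
proof (induction n arbitrary: j rule: less_induct)
  case (less n)
  have strict: "rhbs_cost_sum (n - 1) + 2 ^ (k + 1) = n * (k + 2)"
    if k: "2 ^ k < n" "n \<le> 2 ^ (k + 1)" for k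
  proof (cases k)
    case 0
    then have "n = 2" using k by simp
    moreover have "rhbs_d 1 = 1" by (simp add: rhbs_d_def rhbs_K_def lg_def)
    ultimately show ?thesis using 0 rhbs_cost_sum_split[of 1]
      by (simp add: rhbs_cost_sum_def rhbs_cost.simps)
  next
    case (Suc k')
    define x :: nat where "x = 2 ^ k'"
    define d where "d = rhbs_d (n - 1)"
    have x: "2 * x < n" "n \<le> 4 * x" "2 ^ k = 2 * x" "2 ^ (k + 1) = 4 * x"
      using k Suc by (simp_all add: x_def)
    note bal = rhbs_d_balanced[of k' n, folded x_def d_def, OF x(1,2)]
    have left: "rhbs_cost_sum (d - 1) + 2 * x = d * (k + 1)"
      using less.IH[of d k'] bal x Suc by (simp add: x_def)
    have right: "rhbs_cost_sum (n - d - 1) + 2 * x = (n - d) * (k + 1)"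
      using less.IH[of "n - d" k'] bal x Suc by (simp add: x_def)
    have "rhbs_cost_sum (n - 1) = n + rhbs_cost_sum (d - 1) + rhbs_cost_sum (n - d - 1)"
      using rhbs_cost_sum_split[of "n - 1"] x bal by (simp add: d_def)
    moreover have "d * (k + 1) + (n - d) * (k + 1) = n * (k + 1)"
      using bal by (simp add: add_mult_distrib[symmetric])
    ultimately show ?thesis using left right x(4) by (simp add: algebra_simps)
  qed
  show ?case
  proof (cases "2 ^ j < n")
    case True
    then show ?thesis using strict less.prems by blast
  next
    case False
    then have n: "n = 2 ^ j" using less.prems by simp
    show ?thesis
    proof (cases j)
      case 0
      then show ?thesis using n by (simp add: rhbs_cost_sum_def rhbs_cost.simps)
    next
      case (Suc j')
      then have "rhbs_cost_sum (n - 1) + 2 ^ (j' + 1) = n * (j' + 2)"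
        using n by (intro strict) auto
      then show ?thesis using n Suc by (simp add: algebra_simps)
    qed
  qed
qed

definition rhbs_cost_total :: "nat \<Rightarrow> nat" where
  "rhbs_cost_total N = (\<Sum>m<N. rhbs_cost_sum m)"

lemma rhbs_cost_total_closed_form:
  assumes "2 ^ q \<le> N + 1" "N + 1 \<le> 2 ^ (q + 1)"
  shows "6 * real (rhbs_cost_total N) = 3 * (real q + 2) * real N * (real N + 1)
           + (2 ^ (q + 1) - 1) * (2 ^ (q + 1) - 2) - 6 * 2 ^ (q + 1) * real N"
  using assms
proof (induction N arbitrary: q)
  case 0
  then have "q = 0" by (cases q) (simp_all add: le_Suc_eq)
  then show ?case by (simp add: rhbs_cost_total_def)
next
  case (Suc N)
  have total: "real (rhbs_cost_total (Suc N)) = real (rhbs_cost_total N) + real (rhbs_cost_sum N)"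
    by (simp add: rhbs_cost_total_def)
  show ?case
  proof (cases "2 ^ q \<le> N + 1")
    case True
    have IH: "6 * real (rhbs_cost_total N) = 3 * (real q + 2) * real N * (real N + 1)
           + (2 ^ (q + 1) - 1) * (2 ^ (q + 1) - 2) - 6 * 2 ^ (q + 1) * real N"
      using True Suc.prems by (intro Suc.IH) auto
    have "real (rhbs_cost_sum N + 2 ^ (q + 1)) = real ((N + 1) * (q + 2))"
      using rhbs_cost_sum_closed_form[of q "N + 1"] True Suc.prems by simp
    then have "real (rhbs_cost_sum N) + 2 ^ (q + 1) = (real N + 1) * (real q + 2)"
      by (simp only: of_nat_add of_nat_mult of_nat_power of_nat_numeral of_nat_1)
    with IH show ?thesis unfolding total of_nat_Suc by (simp add: algebra_simps)
  next
    case False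
    then have N: "N + 2 = 2 ^ q" using Suc.prems by simp
    then obtain r where r: "q = Suc r" by (cases q) auto
    have "real (N + 2) = real (2 ^ (r + 1))" using N r by simp
    then have Nr: "real N + 2 = 2 ^ (r + 1)"
      by (simp only: of_nat_add of_nat_power of_nat_numeral)
    have IH: "6 * real (rhbs_cost_total N) = 3 * (real r + 2) * real N * (real N + 1)
           + (2 ^ (r + 1) - 1) * (2 ^ (r + 1) - 2) - 6 * 2 ^ (r + 1) * real N"
      using N r by (intro Suc.IH) auto
    have "real (rhbs_cost_sum N + 2 ^ (r + 1)) = real ((N + 1) * (r + 2))"
      using rhbs_cost_sum_closed_form[of r "N + 1"] N r by simp
    then have "real (rhbs_cost_sum N) + 2 ^ (r + 1) = (real N + 1) * (real r + 2)"
      by (simp only: of_nat_add of_nat_mult of_nat_power of_nat_numeral of_nat_1)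
    moreover have "(2::real) ^ (Suc r + 1) = 2 * (real N + 2)" using Nr by simp
    ultimately show ?thesis using IH unfolding total r Nr[symmetric] of_nat_Suc
      by (simp add: algebra_simps)
  qed
qed

lemma step4_numerator_eq:
  "(\<Sum>a\<in>{1..i}. \<Sum>b\<in>{a<..i}. rhbs_cost (i - 1 - a) (b - a - 1)) = rhbs_cost_total (i - 1)"
proof -
  have inner: "(\<Sum>b\<in>{a<..i}. rhbs_cost (i - 1 - a) (b - a - 1)) = rhbs_cost_sum (i - 1 - a)"
    if "a < i" for a
    unfolding rhbs_cost_sum_def using that
    by (intro sum.reindex_bij_witness[where i="\<lambda>k. k + a + 1" and j="\<lambda>b. b - a - 1"]) auto
  have "(\<Sum>a\<in>{1..i}. \<Sum>b\<in>{a<..i}. rhbs_cost (i - 1 - a) (b - a - 1))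
      = (\<Sum>a\<in>{1..<i}. \<Sum>b\<in>{a<..i}. rhbs_cost (i - 1 - a) (b - a - 1))"
    by (intro sum.mono_neutral_right) auto
  also have "\<dots> = (\<Sum>a\<in>{1..<i}. rhbs_cost_sum (i - 1 - a))"
    by (intro sum.cong refl inner) auto
  also have "\<dots> = rhbs_cost_total (i - 1)"
    unfolding rhbs_cost_total_def
    by (rule sum.reindex_bij_witness[where i="\<lambda>m. i - 1 - m" and j="\<lambda>a. i - 1 - a"]) auto
  finally show ?thesis .
qed

lemma step4_avg_closed_form:
  fixes i q :: nat
  defines "P \<equiv> (2::real) ^ (q + 1)"
  assumes "2 \<le> i" "2 ^ q \<le> i" "i \<le> 2 ^ (q + 1)"
  shows "step4_avg i = (3 * (real q + 2) * (real i - 1) * real i + (P - 1) * (P - 2)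
                        - 6 * P * (real i - 1)) / (3 * real i * (real i - 1))"
proof -
  have "even (i * (i - 1))" by (cases "even i") auto
  then have "real (i choose 2) = real (i * (i - 1)) / 2"
    unfolding choose_two by (simp add: real_of_nat_div)
  then have choose: "real (i choose 2) = real i * (real i - 1) / 2"
    using assms(2) by (simp add: of_nat_diff)
  have "step4_avg i = real (rhbs_cost_total (i - 1)) / real (i choose 2)"
    unfolding step4_avg_def step4_numerator_eq[symmetric] by simp
  moreover have "6 * real (rhbs_cost_total (i - 1)) = 3 * (real q + 2) * (real i - 1) * real i
                   + (P - 1) * (P - 2) - 6 * P * (real i - 1)"
    using rhbs_cost_total_closed_form[of q "i - 1"] assms by (simp add: of_nat_diff)
  ultimately show ?thesis using assms(2) unfolding choose by (simp add: field_simps)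
qed

lemma step4_expansion_error:
  fixes I P q :: real
  assumes "4 \<le> I" "I \<le> P" "P \<le> 2 * I"
  shows "\<bar>(3 * (q + 2) * (I - 1) * I + (P - 1) * (P - 2) - 6 * P * (I - 1)) / (3 * I * (I - 1))
           - (q + 1 + 1 - 2 / (I / P) + 1 / (3 * (I / P)\<^sup>2))\<bar> \<le> 3 / I"
    (is "\<bar>?avg - ?approx\<bar> \<le> _")
proof -
  define e where "e = P * P - 3 * (P * I) + 2 * I"
  have "?avg - ?approx = e / (3 * I\<^sup>2 * (I - 1))"
    using assms unfolding e_def by (simp add: field_simps power2_eq_square)
  then have "\<bar>?avg - ?approx\<bar> = \<bar>e\<bar> / (3 * I\<^sup>2 * (I - 1))"
    using assms by (simp add: abs_divide)
  also have "\<dots> \<le> 6 * I\<^sup>2 / (3 * I\<^sup>2 * (I - 1))"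
  proof (intro divide_right_mono)
    have "P * P \<le> 3 * (P * I)" "P * I \<le> 2 * (I * I)" "2 * I \<le> I * I" "0 \<le> P * P"
      using assms by (auto intro: mult_mono)
    then show "\<bar>e\<bar> \<le> 6 * I\<^sup>2" using assms unfolding e_def power2_eq_square by linarith
  qed (use assms in simp)
  also have "\<dots> \<le> 3 / I"
    using assms by (simp add: field_simps power2_eq_square)
  finally show ?thesis .
qed

lemma even_between_powers2:
  fixes i :: nat
  assumes "even i" "4 \<le> i"
  obtains q where "2 ^ q < i - 1" "i \<le> 2 ^ (q + 1)"
proof -
  have "\<exists>q. 2 ^ q \<le> i - 1 \<and> i - 1 < 2 ^ (q + 1)"
    using assms by (intro ex_power_ivl1) auto
  then obtain q where q: "2 ^ q \<le> i - 1" "i - 1 < 2 ^ (q + 1)" by blast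
  have "q \<noteq> 0" using q assms by (intro notI) auto
  then have "even ((2::nat) ^ q)" by simp
  moreover have "odd (i - 1)" using assms by simp
  ultimately have "2 ^ q \<noteq> i - 1" by metis
  with q show thesis by (intro that[of q]) auto
qed

theorem lemma2:
  shows "\<exists>C::real. \<forall>i::nat. even i \<and> i \<ge> 4 \<longrightarrow>
    \<bar>step4_avg i - (of_int \<lceil>lg (real (i - 1))\<rceil> + 1 - 2 / p_ratio i
                     + 1 / (3 * (p_ratio i)\<^sup>2))\<bar> \<le> C / real i"
proof (intro exI[of _ 3] allI impI)
  fix i :: nat
  assume i: "even i \<and> i \<ge> 4"
  then obtain q where q: "2 ^ q < i - 1" "i \<le> 2 ^ (q + 1)"
    using even_between_powers2 by blast
  have lg: "\<lceil>lg (real (i - 1))\<rceil> = int q + 1" "\<lceil>lg (real i)\<rceil> = int q + 1"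
    by (rule ceiling_lg_eq; use q in simp)+
  define P :: real where "P = 2 ^ (q + 1)"
  have "i \<le> 2 ^ (q + 1)" "2 ^ (q + 1) \<le> 2 * i" using q by auto
  then have P: "real i \<le> P" "P \<le> 2 * real i"
    unfolding P_def by (metis of_nat_le_iff of_nat_numeral of_nat_power of_nat_mult)+
  have "p_ratio i = real i / P"
    unfolding p_ratio_def lg(2) P_def by (simp add: powr_add powr_realpow)
  moreover have "step4_avg i = (3 * (real q + 2) * (real i - 1) * real i + (P - 1) * (P - 2)
                        - 6 * P * (real i - 1)) / (3 * real i * (real i - 1))"
    unfolding P_def using q i by (intro step4_avg_closed_form) auto
  ultimately show "\<bar>step4_avg i - (of_int \<lceil>lg (real (i - 1))\<rceil> + 1 - 2 / p_ratio i
                     + 1 / (3 * (p_ratio i)\<^sup>2))\<bar> \<le> 3 / real i"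
    using step4_expansion_error[OF _ P, of "real q"] i unfolding lg(1) by simp
qed

end
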